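(* Let $1\le r\le s\le t$ and let $u=ABCd$, $v=A'B'C'd'$ be vertices of $E3C(r,s,t)$ with $A\ne A'$, $B\ne B'$, $C=C'$ and $d\ne d'$. Then there exist $2r+2$ pairwise internally disjoint $u$–$v$ paths in $E3C(r,s,t)$, each of length at most $r+s+7$.
   Context: The exchanged 3-ary $n$-cube $E3C(r,s,t)$ ($r,s,t\ge1$, $n=r+s+t+1$): vertices are strings written $x=ABCd$ with $A\in\{0,1,2\}^r$, $B\in\{0,1,2\}^s$, $C\in\{0,1,2\}^t$, $d\in\{0,1,2\}$. Two distinct vertices $x=ABCd$, $y=A'B'C'd'$ are adjacent iff one of: (E0) $A=A',B=B',C=C'$ and $d\ne d'$; (E1) $d=d'=0$, $A=A'$, $B=B'$ and $C,C'$ differ in exactly one position; (E2) $d=d'=1$, $A=A'$, $C=C'$ and $B,B'$ differ in exactly one position; (E3) $d=d'=2$, $B=B'$, $C=C'$ and $A,A'$ differ in exactly one position. Paths are internally disjoint if they share no vertices other than their endpoints; length = number of edges. *)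

theory Defs
  imports Main
begin

type_synonym e3vert = "nat list \<times> nat list \<times> nat list \<times> nat"

definition tern_str :: "nat \<Rightarrow> nat list \<Rightarrow> bool" where
  "tern_str k X \<longleftrightarrow> length X = k \<and> (\<forall>x\<in>set X. x < 3)"

definition e3c_verts :: "nat \<Rightarrow> nat \<Rightarrow> nat \<Rightarrow> e3vert set" where
  "e3c_verts r s t = {(A,B,C,d). tern_str r A \<and> tern_str s B \<and> tern_str t C \<and> d < 3}"

definition differ1 :: "nat list \<Rightarrow> nat list \<Rightarrow> bool" where
  "differ1 X Y \<longleftrightarrow> length X = length Y \<and> card {i. i < length X \<and> X ! i \<noteq> Y ! i} = 1"

definition e3c_adj :: "nat \<Rightarrow> nat \<Rightarrow> nat \<Rightarrow> e3vert \<Rightarrow> e3vert \<Rightarrow> bool" where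
  "e3c_adj r s t x y \<longleftrightarrow> x \<in> e3c_verts r s t \<and> y \<in> e3c_verts r s t \<and> x \<noteq> y \<and>
     (case x of (A,B,C,d) \<Rightarrow> case y of (A',B',C',d') \<Rightarrow>
        (A = A' \<and> B = B' \<and> C = C' \<and> d \<noteq> d')
      \<or> (d = 0 \<and> d' = 0 \<and> A = A' \<and> B = B' \<and> differ1 C C')
      \<or> (d = 1 \<and> d' = 1 \<and> A = A' \<and> C = C' \<and> differ1 B B')
      \<or> (d = 2 \<and> d' = 2 \<and> B = B' \<and> C = C' \<and> differ1 A A'))"

definition e3c_path :: "nat \<Rightarrow> nat \<Rightarrow> nat \<Rightarrow> e3vert \<Rightarrow> e3vert \<Rightarrow> e3vert list \<Rightarrow> bool" where
  "e3c_path r s t u v p \<longleftrightarrow> p \<noteq> [] \<and> hd p = u \<and> last p = v \<and> distinct p \<and>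
     set p \<subseteq> e3c_verts r s t \<and>
     (\<forall>i. Suc i < length p \<longrightarrow> e3c_adj r s t (p ! i) (p ! Suc i))"

definition path_len :: "'a list \<Rightarrow> nat" where
  "path_len p = length p - 1"

definition internally_disjoint :: "'a \<Rightarrow> 'a \<Rightarrow> 'a list \<Rightarrow> 'a list \<Rightarrow> bool" where
  "internally_disjoint u v p q \<longleftrightarrow> set p \<inter> set q \<subseteq> {u, v}"

end

theory Submission
  imports Defs
begin

text \<open>Reversing paths, and the isomorphism that exchanges the \<open>A\<close>- and \<open>B\<close>-parts together with
  the digits 1 and 2, reduce the claim to the digit pairs \<open>(2, 1)\<close> and \<open>(2, 0)\<close>, the pair
  \<open>(1, 0)\<close> becoming \<open>(2, 0)\<close> in \<open>E3C(s, r, t)\<close>. From \<open>u = ABC2\<close>, each of the \<open>2r\<close>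
  neighbours \<open>A\<^sub>h\<close> of \<open>A\<close>, except the first step of the geodesic from \<open>A\<close> to \<open>A'\<close>, starts a
  detour: step to \<open>A\<^sub>h\<close>, move the \<open>B\<close>-part in layer 1, correct \<open>A\<^sub>h\<close> into \<open>A'\<close> in layer 2 and
  finish in the target layer. The detours are kept apart in layer 2 by running over the \<open>h\<close>-th
  neighbour of \<open>C\<close> (target digit 0), resp. of \<open>B'\<close> (target digit 1). The excluded index carries
  the path that corrects \<open>A\<close> first and \<open>B\<close> second; the path correcting \<open>B\<close> first and one
  through a neighbour of \<open>C\<close> complete the \<open>2r + 2\<close> paths. Every internal vertex determines the
  path it lies on, which gives internal disjointness.\<close>

section \<open>Hamming distance and geodesics\<close>

fun hamming :: "nat list \<Rightarrow> nat list \<Rightarrow> nat" where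
  "hamming (x # xs) (y # ys) = (if x = y then 0 else 1) + hamming xs ys"
| "hamming _ _ = 0"

lemma hamming_self [simp]: "hamming X X = 0"
  by (induction X) auto

lemma hamming_commute: "hamming X Y = hamming Y X"
  by (induction X Y rule: hamming.induct) auto

lemma hamming_le_length: "hamming X Y \<le> length X"
  by (induction X Y rule: hamming.induct) auto

lemma hamming_eq_0_iff: "length X = length Y \<Longrightarrow> hamming X Y = 0 \<longleftrightarrow> X = Y"
  by (induction X Y rule: hamming.induct) auto

lemma card_mismatches_eq_hamming:
  "length X = length Y \<Longrightarrow> card {i. i < length X \<and> X ! i \<noteq> Y ! i} = hamming X Y"
proof (induction X arbitrary: Y)
  case (Cons x xs)
  then obtain y ys where Y: "Y = y # ys" "length xs = length ys" by (cases Y) auto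
  let ?M = "{i. i < length xs \<and> xs ! i \<noteq> ys ! i}"
  have "{i. i < length (x # xs) \<and> (x # xs) ! i \<noteq> Y ! i} = (if x = y then {} else {0}) \<union> Suc ` ?M"
    (is "?L = ?R")
  proof (rule set_eqI)
    show "i \<in> ?L \<longleftrightarrow> i \<in> ?R" for i by (cases i) (auto simp: Y)
  qed
  moreover have "card ((if x = y then {} else {0}) \<union> Suc ` ?M) = (if x = y then 0 else 1) + card ?M"
    by (auto simp: card_image)
  ultimately show ?case using Cons.IH[OF Y(2)] Y(1) by simp
qed simp

lemma differ1_iff_hamming: "differ1 X Y \<longleftrightarrow> length X = length Y \<and> hamming X Y = 1"
  unfolding differ1_def using card_mismatches_eq_hamming by metis

lemma differ1_commute: "differ1 X Y \<Longrightarrow> differ1 Y X"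
  by (simp add: differ1_iff_hamming hamming_commute)

lemma differ1_neq: "differ1 X Y \<Longrightarrow> X \<noteq> Y"
  by (auto simp: differ1_iff_hamming)

fun geodesic :: "nat list \<Rightarrow> nat list \<Rightarrow> nat list list" where
  "geodesic (x # xs) (y # ys) =
     (if x = y then map ((#) x) (geodesic xs ys)
      else (x # xs) # map ((#) y) (geodesic xs ys))"
| "geodesic xs ys = [xs]"

lemma geodesic_neq_Nil [simp]: "geodesic X Y \<noteq> []"
  by (induction X Y rule: geodesic.induct) auto

lemma hd_geodesic [simp]: "hd (geodesic X Y) = X"
  by (induction X Y rule: geodesic.induct) (auto simp: hd_map)

lemma last_geodesic [simp]: "length X = length Y \<Longrightarrow> last (geodesic X Y) = Y"
  by (induction X Y rule: geodesic.induct) (auto simp: last_map)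

lemma hd_in_geodesic: "X \<in> set (geodesic X Y)"
  using hd_geodesic geodesic_neq_Nil hd_in_set by metis

lemma last_in_geodesic: "length X = length Y \<Longrightarrow> Y \<in> set (geodesic X Y)"
  using last_geodesic geodesic_neq_Nil last_in_set by metis

lemma length_geodesic: "length X = length Y \<Longrightarrow> length (geodesic X Y) = hamming X Y + 1"
  by (induction X Y rule: geodesic.induct) auto

lemma hamming_nth_geodesic:
  "length X = length Y \<Longrightarrow> i < length (geodesic X Y) \<Longrightarrow> hamming X (geodesic X Y ! i) = i"
  by (induction X Y arbitrary: i rule: geodesic.induct) (auto simp: nth_Cons split: nat.splits)

lemma distinct_geodesic: "length X = length Y \<Longrightarrow> distinct (geodesic X Y)"
  unfolding distinct_conv_nth using hamming_nth_geodesic by metis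

lemma hamming_in_geodesic:
  "length X = length Y \<Longrightarrow> Z \<in> set (geodesic X Y) \<Longrightarrow> hamming X Z + hamming Z Y = hamming X Y"
  by (induction X Y arbitrary: Z rule: geodesic.induct) (auto split: if_splits)

lemma geodesic_eq_if_hamming_from_eq:
  "length X = length Y \<Longrightarrow> Z \<in> set (geodesic X Y) \<Longrightarrow> Z' \<in> set (geodesic X Y)
   \<Longrightarrow> hamming X Z = hamming X Z' \<Longrightarrow> Z = Z'"
  by (metis in_set_conv_nth hamming_nth_geodesic)

lemma geodesic_eq_if_hamming_to_eq:
  "length X = length Y \<Longrightarrow> Z \<in> set (geodesic X Y) \<Longrightarrow> Z' \<in> set (geodesic X Y)
   \<Longrightarrow> hamming Z Y = hamming Z' Y \<Longrightarrow> Z = Z'"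
  by (metis geodesic_eq_if_hamming_from_eq hamming_in_geodesic add_right_cancel)

lemma successively_differ1_geodesic: "length X = length Y \<Longrightarrow> successively differ1 (geodesic X Y)"
proof (induction X Y rule: geodesic.induct)
  case (1 x xs y ys)
  have "successively differ1 (map ((#) z) (geodesic xs ys))" for z
    using 1 by (auto simp: successively_map differ1_iff_hamming elim!: successively_mono)
  moreover have "hd (map ((#) y) (geodesic xs ys)) = y # xs"
    by (simp add: hd_map)
  ultimately show ?case
    using 1(3) by (auto simp: successively_Cons differ1_iff_hamming)
qed auto

lemma tern_str_geodesic:
  assumes "tern_str n X" "tern_str n Y" "Z \<in> set (geodesic X Y)"
  shows "tern_str n Z"
proof -
  have "length Z = length X \<and> set Z \<subseteq> set X \<union> set Y"
    using assms(3) by (induction X Y arbitrary: Z rule: geodesic.induct) (fastforce split: if_splits)+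
  then show ?thesis
    using assms(1,2) by (auto simp: tern_str_def)
qed

lemma length_geodesic_le: "tern_str n X \<Longrightarrow> tern_str n Y \<Longrightarrow> length (geodesic X Y) \<le> n + 1"
  using length_geodesic[of X Y] hamming_le_length[of X Y] by (simp add: tern_str_def)

section \<open>Neighbours of a ternary string\<close>

text \<open>The \<open>2 n\<close> neighbours of a ternary string of length \<open>n\<close>: \<open>nbr X h\<close> changes position
  \<open>h div 2\<close> to the one of the two other digits selected by \<open>h mod 2\<close>.\<close>

definition nbr :: "nat list \<Rightarrow> nat \<Rightarrow> nat list" where
  "nbr X h = X[h div 2 := (X ! (h div 2) + h mod 2 + 1) mod 3]"

definition nbr_index :: "nat list \<Rightarrow> nat list \<Rightarrow> nat" where
  "nbr_index X Z = (SOME h. h < 2 * length X \<and> Z = nbr X h)"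

lemma length_nbr [simp]: "length (nbr X h) = length X"
  by (simp add: nbr_def)

lemma less_3_cases: "(x::nat) < 3 \<Longrightarrow> x = 0 \<or> x = 1 \<or> x = 2"
  by auto

lemma mod3_shift_neq:
  assumes "(x::nat) < 3" "m < 2"
  shows "Suc (x + m) mod 3 \<noteq> x"
  using less_3_cases[OF assms(1)] less_2_cases[OF assms(2)] by (elim disjE) simp_all

lemma hamming_list_update:
  "k < length X \<Longrightarrow> hamming X (X[k := c]) = (if X ! k = c then 0 else 1)"
  by (induction X arbitrary: k) (auto simp: nth_Cons split: nat.splits)

lemma tern_str_nbr: "tern_str n X \<Longrightarrow> tern_str n (nbr X h)"
  unfolding tern_str_def nbr_def by (auto dest: set_update_subset_insert[THEN subsetD])

lemma hamming_nbr: "tern_str n X \<Longrightarrow> h < 2 * n \<Longrightarrow> hamming X (nbr X h) = 1"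
  unfolding nbr_def tern_str_def by (simp add: hamming_list_update mod3_shift_neq[THEN not_sym])

lemma differ1_nbr: "tern_str n X \<Longrightarrow> h < 2 * n \<Longrightarrow> differ1 X (nbr X h)"
  by (simp add: differ1_iff_hamming hamming_nbr)

lemma nbr_neq: "tern_str n X \<Longrightarrow> h < 2 * n \<Longrightarrow> nbr X h \<noteq> X"
  using hamming_nbr by force

lemma nbr_inj:
  assumes X: "tern_str n X" and h: "h < 2 * n" "h' < 2 * n" and eq: "nbr X h = nbr X h'"
  shows "h = h'"
proof -
  have k: "h div 2 < length X" "h' div 2 < length X" and x3: "\<forall>x\<in>set X. x < 3"
    using X h by (auto simp: tern_str_def)
  have same_pos: "h div 2 = h' div 2"
  proof (rule ccontr)
    assume "h div 2 \<noteq> h' div 2"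
    then have "nbr X h' ! (h div 2) = X ! (h div 2)"
      by (simp add: nbr_def)
    moreover have "nbr X h ! (h div 2) \<noteq> X ! (h div 2)"
      using k x3 by (simp add: nbr_def mod3_shift_neq)
    ultimately show False using eq by simp
  qed
  have "X ! (h div 2) < 3" using k x3 by simp
  moreover have "(X ! (h div 2) + h mod 2 + 1) mod 3 = (X ! (h div 2) + h' mod 2 + 1) mod 3"
    using arg_cong[OF eq, of "\<lambda>Z. Z ! (h div 2)"] k same_pos by (simp add: nbr_def)
  moreover have "h mod 2 < 2" "h' mod 2 < 2" by simp_all
  ultimately have "h mod 2 = h' mod 2"
    by (auto dest!: less_3_cases simp: less_2_cases_iff)
  then show ?thesis
    using same_pos by (metis div_mod_decomp)
qed

lemma nbr_index_nbr: "tern_str n X \<Longrightarrow> h < 2 * n \<Longrightarrow> nbr_index X (nbr X h) = h"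
  unfolding nbr_index_def by (rule some_equality) (auto simp: tern_str_def intro: nbr_inj[symmetric])

lemma hamming_1_imp_list_update:
  "length X = length Z \<Longrightarrow> hamming X Z = 1 \<Longrightarrow>
   \<exists>k<length X. Z = X[k := Z ! k] \<and> Z ! k \<noteq> X ! k"
proof (induction X Z rule: hamming.induct)
  case (1 x xs y ys)
  show ?case
  proof (cases "x = y")
    case True
    then obtain k where "k < length xs" "ys = xs[k := ys ! k]" "ys ! k \<noteq> xs ! k"
      using 1 by auto
    then show ?thesis using True by (intro exI[of _ "Suc k"]) auto
  next
    case False
    then have "xs = ys" using 1 hamming_eq_0_iff by simp
    then show ?thesis using False by (intro exI[of _ 0]) auto
  qed
qed auto

lemma hamming_1_imp_nbr:
  assumes "tern_str n X" "tern_str n Z" "hamming X Z = 1"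
  obtains h where "h < 2 * n" "Z = nbr X h"
proof -
  obtain k where k: "k < length X" "Z = X[k := Z ! k]" "Z ! k \<noteq> X ! k"
    using hamming_1_imp_list_update[of X Z] assms by (auto simp: tern_str_def)
  have x3: "X ! k < 3" "Z ! k < 3" using k assms by (auto simp: tern_str_def)
  define m where "m = (if Z ! k = (X ! k + 1) mod 3 then 0 else 1::nat)"
  have "Z ! k = (X ! k + m + 1) mod 3"
    using x3 k(3) unfolding m_def by (auto dest!: less_3_cases)
  moreover have "(2 * k + m) div 2 = k" "(2 * k + m) mod 2 = m" by (auto simp: m_def)
  ultimately have "Z = nbr X (2 * k + m)" using k(2) by (simp add: nbr_def)
  moreover have "2 * k + m < 2 * n" using k(1) assms(1) by (auto simp: m_def tern_str_def)
  ultimately show ?thesis using that by blast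
qed

section \<open>Paths in the exchanged 3-ary cube\<close>

lemma e3c_verts_iff [simp]:
  "(X, Y, Z, e) \<in> e3c_verts r s t \<longleftrightarrow> tern_str r X \<and> tern_str s Y \<and> tern_str t Z \<and> e < 3"
  by (simp add: e3c_verts_def)

lemma e3c_adj_sym: "e3c_adj r s t x y \<Longrightarrow> e3c_adj r s t y x"
  unfolding e3c_adj_def by (auto simp: differ1_commute split: prod.splits)

lemma e3c_adj_digit:
  "tern_str r X \<Longrightarrow> tern_str s Y \<Longrightarrow> tern_str t Z \<Longrightarrow> e < 3 \<Longrightarrow> e' < 3 \<Longrightarrow> e \<noteq> e'
   \<Longrightarrow> e3c_adj r s t (X, Y, Z, e) (X, Y, Z, e')"
  unfolding e3c_adj_def by simp

lemma e3c_adj_0: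
  "tern_str r X \<Longrightarrow> tern_str s Y \<Longrightarrow> tern_str t Z \<Longrightarrow> tern_str t Z' \<Longrightarrow> differ1 Z Z'
   \<Longrightarrow> e3c_adj r s t (X, Y, Z, 0) (X, Y, Z', 0)"
  unfolding e3c_adj_def using differ1_neq by auto

lemma e3c_adj_1:
  "tern_str r X \<Longrightarrow> tern_str s Y \<Longrightarrow> tern_str s Y' \<Longrightarrow> tern_str t Z \<Longrightarrow> differ1 Y Y'
   \<Longrightarrow> e3c_adj r s t (X, Y, Z, 1) (X, Y', Z, 1)"
  unfolding e3c_adj_def using differ1_neq by auto

lemma e3c_adj_2:
  "tern_str r X \<Longrightarrow> tern_str r X' \<Longrightarrow> tern_str s Y \<Longrightarrow> tern_str t Z \<Longrightarrow> differ1 X X'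
   \<Longrightarrow> e3c_adj r s t (X, Y, Z, 2) (X', Y, Z, 2)"
  unfolding e3c_adj_def using differ1_neq by auto

lemma successively_e3c_adj_geodesic_1:
  assumes "tern_str r X" "tern_str s Y" "tern_str s Y'" "tern_str t Z"
  shows "successively (e3c_adj r s t) (map (\<lambda>W. (X, W, Z, 1)) (geodesic Y Y'))"
proof -
  have "length Y = length Y'" using assms by (simp add: tern_str_def)
  then show ?thesis unfolding successively_map
    by (rule successively_mono[OF successively_differ1_geodesic])
      (meson assms e3c_adj_1 tern_str_geodesic)
qed

lemma successively_e3c_adj_geodesic_2:
  assumes "tern_str r X" "tern_str r X'" "tern_str s Y" "tern_str t Z"
  shows "successively (e3c_adj r s t) (map (\<lambda>W. (W, Y, Z, 2)) (geodesic X X'))"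
proof -
  have "length X = length X'" using assms by (simp add: tern_str_def)
  then show ?thesis unfolding successively_map
    by (rule successively_mono[OF successively_differ1_geodesic])
      (meson assms e3c_adj_2 tern_str_geodesic)
qed

lemma e3c_pathI:
  "p \<noteq> [] \<Longrightarrow> hd p = u \<Longrightarrow> last p = v \<Longrightarrow> distinct p \<Longrightarrow> set p \<subseteq> e3c_verts r s t
   \<Longrightarrow> successively (e3c_adj r s t) p \<Longrightarrow> e3c_path r s t u v p"
  unfolding e3c_path_def successively_conv_nth by blast

lemma e3c_path_rev: "e3c_path r s t u v p \<Longrightarrow> e3c_path r s t v u (rev p)"
  unfolding e3c_path_def successively_conv_nth[symmetric]
  by (auto simp: hd_rev last_rev elim: successively_mono intro: e3c_adj_sym)

text \<open>Exchanging the roles of the \<open>A\<close>- and \<open>B\<close>-parts together with the digits 1 and 2 is an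
  isomorphism from \<open>E3C(s, r, t)\<close> onto \<open>E3C(r, s, t)\<close>.\<close>

definition swap12 :: "nat \<Rightarrow> nat" where
  "swap12 e = (if e = 1 then 2 else if e = 2 then 1 else e)"

fun swap_AB :: "e3vert \<Rightarrow> e3vert" where
  "swap_AB (X, Y, Z, e) = (Y, X, Z, swap12 e)"

lemma swap12_simps [simp]:
  "swap12 e = 0 \<longleftrightarrow> e = 0" "swap12 e = 1 \<longleftrightarrow> e = 2" "swap12 e = 2 \<longleftrightarrow> e = 1"
  "swap12 e = swap12 e' \<longleftrightarrow> e = e'" "swap12 e < 3 \<longleftrightarrow> e < 3"
  by (auto simp: swap12_def)

lemma swap_AB_swap_AB [simp]: "swap_AB (swap_AB x) = x"
  by (cases x) (auto simp: swap12_def)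

lemma inj_swap_AB: "inj swap_AB"
  by (metis injI swap_AB_swap_AB)

lemma swap_AB_in_e3c_verts: "x \<in> e3c_verts s r t \<Longrightarrow> swap_AB x \<in> e3c_verts r s t"
  by (cases x) auto

lemma e3c_adj_swap_AB: "e3c_adj s r t x y \<Longrightarrow> e3c_adj r s t (swap_AB x) (swap_AB y)"
proof -
  obtain X Y Z e X' Y' Z' e' where xy: "x = (X, Y, Z, e)" "y = (X', Y', Z', e')"
    by (cases x, cases y) auto
  assume "e3c_adj s r t x y"
  then show ?thesis
    unfolding xy e3c_adj_def by (simp only: swap_AB.simps e3c_verts_iff swap12_simps prod.case prod.inject) blast
qed

lemma e3c_path_swap_AB:
  assumes "e3c_path s r t u v p"
  shows "e3c_path r s t (swap_AB u) (swap_AB v) (map swap_AB p)"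
proof (rule e3c_pathI)
  have p: "p \<noteq> []" "hd p = u" "last p = v" "distinct p" "set p \<subseteq> e3c_verts s r t"
    "successively (e3c_adj s r t) p"
    using assms by (simp_all add: e3c_path_def successively_conv_nth)
  then show "map swap_AB p \<noteq> []" "hd (map swap_AB p) = swap_AB u" "last (map swap_AB p) = swap_AB v"
    by (simp_all add: hd_map last_map)
  show "distinct (map swap_AB p)"
    using p(4) inj_on_subset[OF inj_swap_AB subset_UNIV] by (simp add: distinct_map)
  show "set (map swap_AB p) \<subseteq> e3c_verts r s t"
    using p(5) swap_AB_in_e3c_verts by auto
  show "successively (e3c_adj r s t) (map swap_AB p)"
    using p(6) unfolding successively_map by (rule successively_mono) (rule e3c_adj_swap_AB)
qed

section \<open>Families of internally disjoint paths\<close>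

definition disjoint_paths ::
  "nat \<Rightarrow> nat \<Rightarrow> nat \<Rightarrow> e3vert \<Rightarrow> e3vert \<Rightarrow> nat \<Rightarrow> nat \<Rightarrow> (nat \<Rightarrow> e3vert list) \<Rightarrow> bool" where
  "disjoint_paths r s t u v n L P \<longleftrightarrow>
     (\<forall>i<n. e3c_path r s t u v (P i) \<and> path_len (P i) \<le> L) \<and>
     (\<forall>i<n. \<forall>j<n. i \<noteq> j \<longrightarrow> internally_disjoint u v (P i) (P j))"

lemma disjoint_paths_by_owner:
  assumes "\<And>i. i < n \<Longrightarrow> e3c_path r s t u v (P i) \<and> path_len (P i) \<le> L"
    and "\<And>i x. i < n \<Longrightarrow> x \<in> set (P i) \<Longrightarrow> x \<noteq> u \<Longrightarrow> x \<noteq> v \<Longrightarrow> owner x = i"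
  shows "disjoint_paths r s t u v n L P"
  unfolding disjoint_paths_def internally_disjoint_def using assms by blast

lemma disjoint_paths_rev:
  "disjoint_paths r s t u v n L P \<Longrightarrow> disjoint_paths r s t v u n L (\<lambda>i. rev (P i))"
  unfolding disjoint_paths_def internally_disjoint_def path_len_def
  by (auto simp: e3c_path_rev insert_commute)

lemma disjoint_paths_swap_AB:
  assumes "disjoint_paths s r t u v n L P"
  shows "disjoint_paths r s t (swap_AB u) (swap_AB v) n L (\<lambda>i. map swap_AB (P i))"
  unfolding disjoint_paths_def
proof (intro conjI allI impI)
  fix i assume "i < n"
  then show "e3c_path r s t (swap_AB u) (swap_AB v) (map swap_AB (P i))"
    and "path_len (map swap_AB (P i)) \<le> L"
    using assms e3c_path_swap_AB by (auto simp: disjoint_paths_def path_len_def)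
next
  fix i j assume "i < n" "j < n" "i \<noteq> j"
  then have "set (P i) \<inter> set (P j) \<subseteq> {u, v}"
    using assms by (auto simp: disjoint_paths_def internally_disjoint_def)
  then show "internally_disjoint (swap_AB u) (swap_AB v) (map swap_AB (P i)) (map swap_AB (P j))"
    unfolding internally_disjoint_def set_map image_Int[OF inj_swap_AB, symmetric] by auto
qed

text \<open>Two of the paths can only coincide if both are the single edge \<open>u v\<close>.\<close>

lemma inj_on_disjoint_paths:
  assumes P: "disjoint_paths r s t u v n L P" and uv: "\<not> e3c_adj r s t u v" "u \<noteq> v"
  shows "inj_on P {..<n}"
proof (rule inj_onI, rule ccontr)
  fix i j assume ij: "i \<in> {..<n}" "j \<in> {..<n}" "P i = P j" "i \<noteq> j"
  have p: "e3c_path r s t u v (P i)" and "internally_disjoint u v (P i) (P j)"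
    using P ij unfolding disjoint_paths_def by auto
  then have sub: "set (P i) \<subseteq> {u, v}"
    using ij(3) by (simp add: internally_disjoint_def)
  have hd: "P i ! 0 = u" and dist: "distinct (P i)"
    using p by (auto simp: e3c_path_def hd_conv_nth)
  have len: "1 < length (P i)"
  proof (rule ccontr)
    assume "\<not> 1 < length (P i)"
    then obtain x where "P i = [x]"
      using p by (cases "P i") (auto simp: e3c_path_def)
    then show False using p uv(2) by (auto simp: e3c_path_def)
  qed
  then have "e3c_adj r s t u (P i ! 1)"
    using p hd by (auto simp: e3c_path_def)
  moreover have "P i ! 1 = v"
  proof -
    have "P i ! 1 \<in> {u, v}" using sub nth_mem[OF len] by blast
    moreover have "P i ! 1 \<noteq> u" using hd len nth_eq_iff_index_eq[OF dist, of 1 0] by force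
    ultimately show ?thesis by blast
  qed
  ultimately show False using uv(1) by simp
qed

lemma geodesic_first_step:
  assumes X: "tern_str n X" and Y: "tern_str n Y" and "X \<noteq> Y"
  obtains h0 where "h0 < 2 * n" "\<And>h. h < 2 * n \<Longrightarrow> h \<noteq> h0 \<Longrightarrow> nbr X h \<notin> set (geodesic X Y)"
proof -
  have l: "length X = length Y" using X Y by (simp add: tern_str_def)
  moreover have "hamming X Y \<noteq> 0" using hamming_eq_0_iff[OF l] \<open>X \<noteq> Y\<close> by simp
  ultimately have len: "1 < length (geodesic X Y)" by (simp add: length_geodesic)
  define Z where "Z = geodesic X Y ! 1"
  have Z: "Z \<in> set (geodesic X Y)" "hamming X Z = 1"
    using len hamming_nth_geodesic[OF l len] by (simp_all add: Z_def)
  then obtain h0 where h0: "h0 < 2 * n" "Z = nbr X h0"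
    using hamming_1_imp_nbr[OF X tern_str_geodesic[OF X Y Z(1)]] by blast
  show ?thesis
  proof (rule that[OF h0(1)])
    fix h assume h: "h < 2 * n" "h \<noteq> h0"
    show "nbr X h \<notin> set (geodesic X Y)"
    proof
      assume "nbr X h \<in> set (geodesic X Y)"
      then have "nbr X h = Z"
        using geodesic_eq_if_hamming_from_eq[OF l _ Z(1)] hamming_nbr[OF X h(1)] Z(2) by simp
      then show False using nbr_inj[OF X h(1) h0(1)] h0(2) h(2) by simp
    qed
  qed
qed

lemma geodesic_last_step:
  assumes X: "tern_str n X" and Y: "tern_str n Y" and "X \<noteq> Y"
  obtains t0 where "t0 < 2 * n" "\<And>h. h < 2 * n \<Longrightarrow> h \<noteq> t0 \<Longrightarrow> nbr Y h \<notin> set (geodesic X Y)"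
proof -
  have l: "length X = length Y" using X Y by (simp add: tern_str_def)
  have "hamming X Y \<noteq> 0" using hamming_eq_0_iff[OF l] \<open>X \<noteq> Y\<close> by simp
  define k where "k = hamming X Y - 1"
  define Z where "Z = geodesic X Y ! k"
  have k: "k < length (geodesic X Y)" using length_geodesic[OF l] by (simp add: k_def)
  then have Z: "Z \<in> set (geodesic X Y)" by (simp add: Z_def)
  moreover have "hamming X Z = k"
    using hamming_nth_geodesic[OF l k] by (simp add: Z_def)
  ultimately have hZ: "hamming Y Z = 1"
    using hamming_in_geodesic[OF l] \<open>hamming X Y \<noteq> 0\<close> hamming_commute[of Y Z] k_def by fastforce
  then obtain t0 where t0: "t0 < 2 * n" "Z = nbr Y t0"
    using hamming_1_imp_nbr[OF Y tern_str_geodesic[OF X Y Z]] by blast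
  show ?thesis
  proof (rule that[OF t0(1)])
    fix h assume h: "h < 2 * n" "h \<noteq> t0"
    show "nbr Y h \<notin> set (geodesic X Y)"
    proof
      assume "nbr Y h \<in> set (geodesic X Y)"
      moreover have "hamming (nbr Y h) Y = hamming Z Y"
        using hamming_nbr[OF Y h(1)] hZ hamming_commute by metis
      ultimately have "nbr Y h = Z"
        using geodesic_eq_if_hamming_to_eq[OF l _ Z] by simp
      then show False using nbr_inj[OF Y h(1) t0(1)] t0(2) h(2) by simp
    qed
  qed
qed

section \<open>The two basic constructions\<close>

locale e3c_endpoints =
  fixes r s t :: nat and A A' B B' C :: "nat list" and h0 :: nat
  assumes tA: "tern_str r A" and tA': "tern_str r A'" and tB: "tern_str s B" and tB': "tern_str s B'"
    and tC: "tern_str t C" and AA': "A \<noteq> A'" and BB': "B \<noteq> B'"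
    and h0: "h0 < 2 * r"
    and h0_first: "\<And>h. h < 2 * r \<Longrightarrow> h \<noteq> h0 \<Longrightarrow> nbr A h \<notin> set (geodesic A A')"
begin

lemma length_eqs: "length A = length A'" "length B = length B'"
  using tA tA' tB tB' by (simp_all add: tern_str_def)

lemma length_geodesics: "length (geodesic A A') \<le> r + 1" "length (geodesic B B') \<le> s + 1"
  using length_geodesic_le[OF tA tA'] length_geodesic_le[OF tB tB'] .

lemma nbr_A_props:
  assumes "h < 2 * r" "h \<noteq> h0"
  shows "nbr A h \<notin> set (geodesic A A')" "nbr A h \<noteq> A" "nbr A h \<noteq> A'"
    "tern_str r (nbr A h)" "differ1 A (nbr A h)" "nbr_index A (nbr A h) = h"
proof -
  show "nbr A h \<notin> set (geodesic A A')" using h0_first[OF assms] .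
  then show "nbr A h \<noteq> A" "nbr A h \<noteq> A'"
    using hd_in_geodesic last_in_geodesic[OF length_eqs(1)] by metis+
  show "tern_str r (nbr A h)" "differ1 A (nbr A h)" "nbr_index A (nbr A h) = h"
    using assms tA by (simp_all add: tern_str_nbr differ1_nbr nbr_index_nbr)
qed

end

locale e3c_2_to_0 = e3c_endpoints +
  fixes m :: nat
  assumes m_le_r: "m \<le> r" and r_le_t: "r \<le> t"
begin

definition C0 :: "nat list" where
  "C0 = nbr C h0"

definition detour :: "nat \<Rightarrow> e3vert list" where
  "detour h = (A, B, C, 2) # (nbr A h, B, C, 2) # map (\<lambda>Y. (nbr A h, Y, C, 1)) (geodesic B B') @
     [(nbr A h, B', C, 0), (nbr A h, B', nbr C h, 0)] @
     map (\<lambda>X. (X, B', nbr C h, 2)) (geodesic (nbr A h) A') @ [(A', B', nbr C h, 0), (A', B', C, 0)]"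

definition A_first :: "e3vert list" where
  "A_first = map (\<lambda>X. (X, B, C, 2)) (geodesic A A') @ map (\<lambda>Y. (A', Y, C, 1)) (geodesic B B') @
     [(A', B', C, 0)]"

definition B_first :: "e3vert list" where
  "B_first = (A, B, C, 2) # map (\<lambda>Y. (A, Y, C, 1)) (geodesic B B') @
     map (\<lambda>X. (X, B', C, 2)) (geodesic A A') @ [(A', B', C, 0)]"

definition via_C0 :: "e3vert list" where
  "via_C0 = (A, B, C, 2) # (A, B, C, 0) # (A, B, C0, 0) # map (\<lambda>X. (X, B, C0, 2)) (geodesic A A') @
     map (\<lambda>Y. (A', Y, C0, 1)) (geodesic B B') @ [(A', B', C0, 0), (A', B', C, 0)]"

definition route :: "nat \<Rightarrow> e3vert list" where
  "route i = (if i < 2 * m then if i = h0 then A_first else detour i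
              else if i = 2 * m then B_first else via_C0)"

fun owner :: "e3vert \<Rightarrow> nat" where
  "owner (X, Y, Z, e) =
    (if e = 0 then
       if X = A then 2 * m + 1 else if X = A' then if Z = C0 then 2 * m + 1 else nbr_index C Z
       else nbr_index A X
     else if e = 2 then
       if Z = C then
         if Y = B then if X \<in> set (geodesic A A') then h0 else nbr_index A X else 2 * m
       else if Z = C0 then 2 * m + 1 else nbr_index C Z
     else if Z = C then if X = A then 2 * m else if X = A' then h0 else nbr_index A X
     else 2 * m + 1)"

lemma C0_props: "tern_str t C0" "differ1 C C0" "C0 \<noteq> C"
  using h0 r_le_t tC by (auto simp: C0_def tern_str_nbr differ1_nbr nbr_neq)

lemma nbr_C_props:
  assumes "h < 2 * m" "h \<noteq> h0"
  shows "nbr C h \<noteq> C0" "nbr C h \<noteq> C" "tern_str t (nbr C h)" "differ1 C (nbr C h)"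
    "nbr_index C (nbr C h) = h"
proof -
  have ht: "h < 2 * t" using assms m_le_r r_le_t by auto
  show "nbr C h \<noteq> C0" using nbr_inj[OF tC ht] h0 r_le_t assms(2) by (auto simp: C0_def)
  show "nbr C h \<noteq> C" "tern_str t (nbr C h)" "differ1 C (nbr C h)" "nbr_index C (nbr C h) = h"
    using ht tC by (simp_all add: nbr_neq tern_str_nbr differ1_nbr nbr_index_nbr)
qed

lemma detour_path:
  assumes h: "h < 2 * m" "h \<noteq> h0"
  shows "e3c_path r s t (A, B, C, 2) (A', B', C, 0) (detour h) \<and> path_len (detour h) \<le> r + s + 7"
proof
  have hr: "h < 2 * r" using h m_le_r by simp
  note X = nbr_A_props[OF hr h(2)] and Z = nbr_C_props[OF h]
  have lX: "length (nbr A h) = length A'" using length_eqs by simp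
  show "e3c_path r s t (A, B, C, 2) (A', B', C, 0) (detour h)"
  proof (rule e3c_pathI)
    show "detour h \<noteq> []" "hd (detour h) = (A, B, C, 2)" "last (detour h) = (A', B', C, 0)"
      by (simp_all add: detour_def)
    show "distinct (detour h)"
      using X(2,3) Z(2) AA' BB' distinct_geodesic[OF length_eqs(2)] distinct_geodesic[OF lX]
      by (auto simp: detour_def distinct_map inj_on_def)
    show "set (detour h) \<subseteq> e3c_verts r s t"
      using X(4) Z(3) tA tA' tB tB' tC tern_str_geodesic[OF tB tB'] tern_str_geodesic[OF X(4) tA']
      by (auto simp: detour_def)
    show "successively (e3c_adj r s t) (detour h)"
      using X(4,5) Z(3,4) tA tA' tB tB' tC successively_e3c_adj_geodesic_1[OF X(4) tB tB' tC]
        successively_e3c_adj_geodesic_2[OF X(4) tA' tB' Z(3)]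
      by (simp add: detour_def successively_append_iff successively_Cons hd_append hd_map last_map
          length_eqs lX e3c_adj_digit e3c_adj_2 e3c_adj_0 differ1_commute)
  qed
  show "path_len (detour h) \<le> r + s + 7"
    using length_geodesics(2) length_geodesic_le[OF X(4) tA'] by (simp add: detour_def path_len_def)
qed

lemma A_first_path:
  "e3c_path r s t (A, B, C, 2) (A', B', C, 0) A_first \<and> path_len A_first \<le> r + s + 7"
proof
  show "e3c_path r s t (A, B, C, 2) (A', B', C, 0) A_first"
  proof (rule e3c_pathI)
    show "A_first \<noteq> []" "hd A_first = (A, B, C, 2)" "last A_first = (A', B', C, 0)"
      by (simp_all add: A_first_def hd_map)
    show "distinct A_first"
      using AA' BB' distinct_geodesic[OF length_eqs(1)] distinct_geodesic[OF length_eqs(2)]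
      by (auto simp: A_first_def distinct_map inj_on_def)
    show "set A_first \<subseteq> e3c_verts r s t"
      using tA tA' tB tB' tC tern_str_geodesic[OF tB tB'] tern_str_geodesic[OF tA tA']
      by (auto simp: A_first_def)
    show "successively (e3c_adj r s t) A_first"
      using tA tA' tB tB' tC successively_e3c_adj_geodesic_2[OF tA tA' tB tC]
        successively_e3c_adj_geodesic_1[OF tA' tB tB' tC]
      by (simp add: A_first_def successively_append_iff successively_Cons hd_append hd_map last_map
          length_eqs e3c_adj_digit)
  qed
  show "path_len A_first \<le> r + s + 7"
    using length_geodesics by (simp add: A_first_def path_len_def)
qed

lemma B_first_path:
  "e3c_path r s t (A, B, C, 2) (A', B', C, 0) B_first \<and> path_len B_first \<le> r + s + 7"
proof
  show "e3c_path r s t (A, B, C, 2) (A', B', C, 0) B_first"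
  proof (rule e3c_pathI)
    show "B_first \<noteq> []" "hd B_first = (A, B, C, 2)" "last B_first = (A', B', C, 0)"
      by (simp_all add: B_first_def)
    show "distinct B_first"
      using AA' BB' distinct_geodesic[OF length_eqs(1)] distinct_geodesic[OF length_eqs(2)]
      by (auto simp: B_first_def distinct_map inj_on_def)
    show "set B_first \<subseteq> e3c_verts r s t"
      using tA tA' tB tB' tC tern_str_geodesic[OF tB tB'] tern_str_geodesic[OF tA tA']
      by (auto simp: B_first_def)
    show "successively (e3c_adj r s t) B_first"
      using tA tA' tB tB' tC successively_e3c_adj_geodesic_2[OF tA tA' tB' tC]
        successively_e3c_adj_geodesic_1[OF tA tB tB' tC]
      by (simp add: B_first_def successively_append_iff successively_Cons hd_append hd_map last_map
          length_eqs e3c_adj_digit)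
  qed
  show "path_len B_first \<le> r + s + 7"
    using length_geodesics by (simp add: B_first_def path_len_def)
qed

lemma via_C0_path:
  "e3c_path r s t (A, B, C, 2) (A', B', C, 0) via_C0 \<and> path_len via_C0 \<le> r + s + 7"
proof
  show "e3c_path r s t (A, B, C, 2) (A', B', C, 0) via_C0"
  proof (rule e3c_pathI)
    show "via_C0 \<noteq> []" "hd via_C0 = (A, B, C, 2)" "last via_C0 = (A', B', C, 0)"
      by (simp_all add: via_C0_def)
    show "distinct via_C0"
      using AA' BB' C0_props distinct_geodesic[OF length_eqs(1)] distinct_geodesic[OF length_eqs(2)]
      by (auto simp: via_C0_def distinct_map inj_on_def)
    show "set via_C0 \<subseteq> e3c_verts r s t"
      using tA tA' tB tB' tC C0_props tern_str_geodesic[OF tB tB'] tern_str_geodesic[OF tA tA']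
      by (auto simp: via_C0_def)
    show "successively (e3c_adj r s t) via_C0"
      using tA tA' tB tB' tC C0_props successively_e3c_adj_geodesic_2[OF tA tA' tB C0_props(1)]
        successively_e3c_adj_geodesic_1[OF tA' tB tB' C0_props(1)]
      by (simp add: via_C0_def successively_append_iff successively_Cons hd_append hd_map last_map
          length_eqs e3c_adj_digit e3c_adj_0 differ1_commute)
  qed
  show "path_len via_C0 \<le> r + s + 7"
    using length_geodesics by (simp add: via_C0_def path_len_def)
qed

lemma owner_route:
  assumes "i < 2 * m + 2" "x \<in> set (route i)" "x \<noteq> (A, B, C, 2)" "x \<noteq> (A', B', C, 0)"
  shows "owner x = i"
proof -
  consider "i < 2 * m" "i \<noteq> h0" | "i = h0" "i < 2 * m" | "i = 2 * m" | "i = 2 * m + 1"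
    using assms(1) by linarith
  then show ?thesis
  proof cases
    case 1
    then show ?thesis
      using assms(2-) nbr_A_props[OF _ 1(2)] nbr_C_props[OF 1] 1(1) m_le_r C0_props(3) AA' BB' by (auto simp: route_def detour_def)
  qed (use assms(2-) AA' BB' C0_props(3) in \<open>auto simp: route_def A_first_def B_first_def via_C0_def\<close>)
qed

lemma disjoint_paths_route:
  "disjoint_paths r s t (A, B, C, 2) (A', B', C, 0) (2 * m + 2) (r + s + 7) route"
proof (rule disjoint_paths_by_owner[where owner = owner])
  show "e3c_path r s t (A, B, C, 2) (A', B', C, 0) (route i) \<and> path_len (route i) \<le> r + s + 7"
    if "i < 2 * m + 2" for i
    using detour_path A_first_path B_first_path via_C0_path by (simp add: route_def)
qed (rule owner_route)

end

locale e3c_2_to_1 = e3c_endpoints +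
  fixes t0 :: nat
  assumes r_le_s: "r \<le> s" and t_pos: "0 < t"
    and t0: "t0 < 2 * s"
    and t0_last: "\<And>h. h < 2 * s \<Longrightarrow> h \<noteq> t0 \<Longrightarrow> nbr B' h \<notin> set (geodesic B B')"
begin

definition C0 :: "nat list" where
  "C0 = nbr C 0"

text \<open>The detour with index \<open>h\<close> enters \<open>B'\<close> from its \<open>h\<close>-th neighbour, except that the index
  \<open>t0\<close>, whose neighbour lies on the geodesic from \<open>B\<close>, is traded for the unused index \<open>h0\<close>.\<close>

definition exit_index :: "nat \<Rightarrow> nat" where
  "exit_index h = (if h = h0 then t0 else if h = t0 then h0 else h)"

lemma exit_index_exit_index [simp]: "exit_index (exit_index h) = h"
  by (simp add: exit_index_def)

definition exit :: "nat \<Rightarrow> nat list" where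
  "exit h = nbr B' (exit_index h)"

definition detour :: "nat \<Rightarrow> e3vert list" where
  "detour h = (A, B, C, 2) # (nbr A h, B, C, 2) # map (\<lambda>Y. (nbr A h, Y, C, 1)) (geodesic B (exit h)) @
     map (\<lambda>X. (X, exit h, C, 2)) (geodesic (nbr A h) A') @ [(A', exit h, C, 1), (A', B', C, 1)]"

definition A_first :: "e3vert list" where
  "A_first = map (\<lambda>X. (X, B, C, 2)) (geodesic A A') @ map (\<lambda>Y. (A', Y, C, 1)) (geodesic B B')"

definition B_first :: "e3vert list" where
  "B_first = (A, B, C, 2) # map (\<lambda>Y. (A, Y, C, 1)) (geodesic B B') @
     map (\<lambda>X. (X, B', C, 2)) (geodesic A A') @ [(A', B', C, 1)]"

definition via_C0 :: "e3vert list" where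
  "via_C0 = (A, B, C, 2) # (A, B, C, 0) # (A, B, C0, 0) # map (\<lambda>X. (X, B, C0, 2)) (geodesic A A') @
     map (\<lambda>Y. (A', Y, C0, 1)) (geodesic B B') @ [(A', B', C0, 0), (A', B', C, 0), (A', B', C, 1)]"

definition route :: "nat \<Rightarrow> e3vert list" where
  "route i = (if i < 2 * r then if i = h0 then A_first else detour i
              else if i = 2 * r then B_first else via_C0)"

fun owner :: "e3vert \<Rightarrow> nat" where
  "owner (X, Y, Z, e) =
    (if Z \<noteq> C \<or> e = 0 then 2 * r + 1
     else if e = 2 then
       if Y = B then if X \<in> set (geodesic A A') then h0 else nbr_index A X
       else if Y = B' then 2 * r else exit_index (nbr_index B' Y)
     else if X = A then 2 * r
     else if X = A' then if Y \<in> set (geodesic B B') then h0 else exit_index (nbr_index B' Y)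
     else nbr_index A X)"

lemma C0_props: "tern_str t C0" "differ1 C C0" "C0 \<noteq> C"
  using t_pos tC by (auto simp: C0_def tern_str_nbr differ1_nbr nbr_neq)

lemma exit_props:
  assumes "h < 2 * r" "h \<noteq> h0"
  shows "exit h \<notin> set (geodesic B B')" "exit h \<noteq> B" "exit h \<noteq> B'"
    "tern_str s (exit h)" "differ1 (exit h) B'" "exit_index (nbr_index B' (exit h)) = h"
proof -
  have e: "exit_index h < 2 * s" "exit_index h \<noteq> t0"
    using assms h0 t0 r_le_s by (auto simp: exit_index_def)
  show "exit h \<notin> set (geodesic B B')" using t0_last[OF e] by (simp add: exit_def)
  then show "exit h \<noteq> B" using hd_in_geodesic by metis
  show "exit h \<noteq> B'" "tern_str s (exit h)" "differ1 (exit h) B'"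
    using nbr_neq[OF tB' e(1)] tern_str_nbr[OF tB'] differ1_nbr[OF tB' e(1)]
    by (auto simp: exit_def differ1_commute)
  show "exit_index (nbr_index B' (exit h)) = h"
    using nbr_index_nbr[OF tB' e(1)] by (simp add: exit_def)
qed

lemma detour_path:
  assumes h: "h < 2 * r" "h \<noteq> h0"
  shows "e3c_path r s t (A, B, C, 2) (A', B', C, 1) (detour h) \<and> path_len (detour h) \<le> r + s + 7"
proof
  note X = nbr_A_props[OF h] and Y = exit_props[OF h]
  have lX: "length (nbr A h) = length A'" and lY: "length (exit h) = length B'"
    using length_eqs Y(4) tB' by (simp_all add: tern_str_def)
  show "e3c_path r s t (A, B, C, 2) (A', B', C, 1) (detour h)"
  proof (rule e3c_pathI)
    show "detour h \<noteq> []" "hd (detour h) = (A, B, C, 2)" "last (detour h) = (A', B', C, 1)"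
      by (simp_all add: detour_def)
    show "distinct (detour h)"
      using X(1-3) Y(1-3) AA' BB' distinct_geodesic[of B "exit h"] distinct_geodesic[OF lX]
      by (auto simp: detour_def distinct_map inj_on_def length_eqs lY)
    show "set (detour h) \<subseteq> e3c_verts r s t"
      using X(4) Y(4) tA tA' tB tB' tC tern_str_geodesic[OF tB Y(4)] tern_str_geodesic[OF X(4) tA']
      by (auto simp: detour_def)
    show "successively (e3c_adj r s t) (detour h)"
      using X(4,5) Y(4,5) tA tA' tB tB' tC e3c_adj_1[OF tA' Y(4) tB' tC Y(5)]
        successively_e3c_adj_geodesic_1[OF X(4) tB Y(4) tC]
        successively_e3c_adj_geodesic_2[OF X(4) tA' Y(4) tC]
      by (simp add: detour_def successively_append_iff successively_Cons hd_append hd_map last_map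
          length_eqs lX lY e3c_adj_digit e3c_adj_2)
  qed
  show "path_len (detour h) \<le> r + s + 7"
    using length_geodesic_le[OF tB Y(4)] length_geodesic_le[OF X(4) tA']
    by (simp add: detour_def path_len_def)
qed

lemma A_first_path:
  "e3c_path r s t (A, B, C, 2) (A', B', C, 1) A_first \<and> path_len A_first \<le> r + s + 7"
proof
  show "e3c_path r s t (A, B, C, 2) (A', B', C, 1) A_first"
  proof (rule e3c_pathI)
    show "A_first \<noteq> []" "hd A_first = (A, B, C, 2)" "last A_first = (A', B', C, 1)"
      by (simp_all add: A_first_def hd_map last_map length_eqs)
    show "distinct A_first"
      using AA' BB' distinct_geodesic[OF length_eqs(1)] distinct_geodesic[OF length_eqs(2)]
      by (auto simp: A_first_def distinct_map inj_on_def)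
    show "set A_first \<subseteq> e3c_verts r s t"
      using tA tA' tB tB' tC tern_str_geodesic[OF tB tB'] tern_str_geodesic[OF tA tA']
      by (auto simp: A_first_def)
    show "successively (e3c_adj r s t) A_first"
      using tA tA' tB tB' tC successively_e3c_adj_geodesic_2[OF tA tA' tB tC]
        successively_e3c_adj_geodesic_1[OF tA' tB tB' tC]
      by (simp add: A_first_def successively_append_iff successively_Cons hd_append hd_map last_map
          length_eqs e3c_adj_digit)
  qed
  show "path_len A_first \<le> r + s + 7"
    using length_geodesics by (simp add: A_first_def path_len_def)
qed

lemma B_first_path:
  "e3c_path r s t (A, B, C, 2) (A', B', C, 1) B_first \<and> path_len B_first \<le> r + s + 7"
proof
  show "e3c_path r s t (A, B, C, 2) (A', B', C, 1) B_first"
  proof (rule e3c_pathI)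
    show "B_first \<noteq> []" "hd B_first = (A, B, C, 2)" "last B_first = (A', B', C, 1)"
      by (simp_all add: B_first_def)
    show "distinct B_first"
      using AA' BB' distinct_geodesic[OF length_eqs(1)] distinct_geodesic[OF length_eqs(2)]
      by (auto simp: B_first_def distinct_map inj_on_def)
    show "set B_first \<subseteq> e3c_verts r s t"
      using tA tA' tB tB' tC tern_str_geodesic[OF tB tB'] tern_str_geodesic[OF tA tA']
      by (auto simp: B_first_def)
    show "successively (e3c_adj r s t) B_first"
      using tA tA' tB tB' tC successively_e3c_adj_geodesic_2[OF tA tA' tB' tC]
        successively_e3c_adj_geodesic_1[OF tA tB tB' tC]
      by (simp add: B_first_def successively_append_iff successively_Cons hd_append hd_map last_map
          length_eqs e3c_adj_digit)
  qed
  show "path_len B_first \<le> r + s + 7"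
    using length_geodesics by (simp add: B_first_def path_len_def)
qed

lemma via_C0_path:
  "e3c_path r s t (A, B, C, 2) (A', B', C, 1) via_C0 \<and> path_len via_C0 \<le> r + s + 7"
proof
  show "e3c_path r s t (A, B, C, 2) (A', B', C, 1) via_C0"
  proof (rule e3c_pathI)
    show "via_C0 \<noteq> []" "hd via_C0 = (A, B, C, 2)" "last via_C0 = (A', B', C, 1)"
      by (simp_all add: via_C0_def)
    show "distinct via_C0"
      using AA' BB' C0_props distinct_geodesic[OF length_eqs(1)] distinct_geodesic[OF length_eqs(2)]
      by (auto simp: via_C0_def distinct_map inj_on_def)
    show "set via_C0 \<subseteq> e3c_verts r s t"
      using tA tA' tB tB' tC C0_props tern_str_geodesic[OF tB tB'] tern_str_geodesic[OF tA tA']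
      by (auto simp: via_C0_def)
    show "successively (e3c_adj r s t) via_C0"
      using tA tA' tB tB' tC C0_props successively_e3c_adj_geodesic_2[OF tA tA' tB C0_props(1)]
        successively_e3c_adj_geodesic_1[OF tA' tB tB' C0_props(1)]
      by (simp add: via_C0_def successively_append_iff successively_Cons hd_append hd_map last_map
          length_eqs e3c_adj_digit e3c_adj_0 differ1_commute)
  qed
  show "path_len via_C0 \<le> r + s + 7"
    using length_geodesics by (simp add: via_C0_def path_len_def)
qed

lemma owner_route:
  assumes "i < 2 * r + 2" "x \<in> set (route i)" "x \<noteq> (A, B, C, 2)" "x \<noteq> (A', B', C, 1)"
  shows "owner x = i"
proof -
  consider "i < 2 * r" "i \<noteq> h0" | "i = h0" "i < 2 * r" | "i = 2 * r" | "i = 2 * r + 1"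
    using assms(1) by linarith
  then show ?thesis
  proof cases
    case 1
    then show ?thesis
      using assms(2-) nbr_A_props[OF 1] exit_props[OF 1] AA' BB' by (auto simp: route_def detour_def)
  next
    case 2
    then show ?thesis
      using assms(2-) AA' BB' last_in_geodesic[OF length_eqs(1)] hd_in_geodesic[of B B']
      by (auto simp: route_def A_first_def)
  qed (use assms(2-) AA' BB' C0_props(3) in \<open>auto simp: route_def B_first_def via_C0_def\<close>)
qed

lemma disjoint_paths_route:
  "disjoint_paths r s t (A, B, C, 2) (A', B', C, 1) (2 * r + 2) (r + s + 7) route"
proof (rule disjoint_paths_by_owner[where owner = owner])
  show "e3c_path r s t (A, B, C, 2) (A', B', C, 1) (route i) \<and> path_len (route i) \<le> r + s + 7"
    if "i < 2 * r + 2" for i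
    using detour_path A_first_path B_first_path via_C0_path by (simp add: route_def)
qed (rule owner_route)

end

lemma disjoint_paths_2_to_0:
  assumes "m \<le> r" "r \<le> t" "tern_str r A" "tern_str r A'" "tern_str s B" "tern_str s B'"
    "tern_str t C" "A \<noteq> A'" "B \<noteq> B'"
  shows "\<exists>P. disjoint_paths r s t (A, B, C, 2) (A', B', C, 0) (2 * m + 2) (r + s + 7) P"
proof -
  obtain h0 where "h0 < 2 * r" "\<And>h. h < 2 * r \<Longrightarrow> h \<noteq> h0 \<Longrightarrow> nbr A h \<notin> set (geodesic A A')"
    using geodesic_first_step[OF assms(3,4,8)] by blast
  then interpret e3c_2_to_0 r s t A A' B B' C h0 m
    using assms by unfold_locales auto
  show ?thesis using disjoint_paths_route by blast
qed

lemma disjoint_paths_2_to_1: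
  assumes "r \<le> s" "0 < t" "tern_str r A" "tern_str r A'" "tern_str s B" "tern_str s B'"
    "tern_str t C" "A \<noteq> A'" "B \<noteq> B'"
  shows "\<exists>P. disjoint_paths r s t (A, B, C, 2) (A', B', C, 1) (2 * r + 2) (r + s + 7) P"
proof -
  obtain h0 where "h0 < 2 * r" "\<And>h. h < 2 * r \<Longrightarrow> h \<noteq> h0 \<Longrightarrow> nbr A h \<notin> set (geodesic A A')"
    using geodesic_first_step[OF assms(3,4,8)] by blast
  moreover obtain t0 where
    "t0 < 2 * s" "\<And>h. h < 2 * s \<Longrightarrow> h \<noteq> t0 \<Longrightarrow> nbr B' h \<notin> set (geodesic B B')"
    using geodesic_last_step[OF assms(5,6,9)] by blast
  ultimately interpret e3c_2_to_1 r s t A A' B B' C h0 t0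
    using assms by unfold_locales auto
  show ?thesis using disjoint_paths_route by blast
qed

lemma disjoint_paths_1_to_0:
  assumes "m \<le> s" "s \<le> t" "tern_str r A" "tern_str r A'" "tern_str s B" "tern_str s B'"
    "tern_str t C" "A \<noteq> A'" "B \<noteq> B'"
  shows "\<exists>P. disjoint_paths r s t (A, B, C, 1) (A', B', C, 0) (2 * m + 2) (r + s + 7) P"
proof -
  obtain P where "disjoint_paths s r t (B, A, C, 2) (B', A', C, 0) (2 * m + 2) (s + r + 7) P"
    using disjoint_paths_2_to_0[of m s t B B' r A A' C] assms by blast
  from disjoint_paths_swap_AB[OF this] show ?thesis
    by (auto simp: swap12_def add.commute)
qed

lemma disjoint_paths_descending:
  assumes "1 \<le> r" "r \<le> s" "s \<le> t" "tern_str r A" "tern_str r A'" "tern_str s B" "tern_str s B'"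
    "tern_str t C" "A \<noteq> A'" "B \<noteq> B'" "d' < d" "d < 3"
  shows "\<exists>P. disjoint_paths r s t (A, B, C, d) (A', B', C, d') (2 * r + 2) (r + s + 7) P"
proof -
  consider "d = 2" "d' = 1" | "d = 2" "d' = 0" | "d = 1" "d' = 0"
    using assms(11,12) by linarith
  then show ?thesis
  proof cases
    case 1
    then show ?thesis using disjoint_paths_2_to_1 assms(1-10) by simp
  next
    case 2
    then show ?thesis using disjoint_paths_2_to_0[of r r t] assms(2-10) by simp
  next
    case 3
    then show ?thesis using disjoint_paths_1_to_0[of r s t] assms(2-10) by simp
  qed
qed

theorem lemma20:
  fixes r s t :: nat and A B C A' B' C' :: "nat list" and d d' :: nat
  assumes "1 \<le> r" "r \<le> s" "s \<le> t"
    and "(A, B, C, d) \<in> e3c_verts r s t"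
    and "(A', B', C', d') \<in> e3c_verts r s t"
    and "A \<noteq> A'" "B \<noteq> B'" "C = C'" "d \<noteq> d'"
  shows "\<exists>P :: nat \<Rightarrow> e3vert list.
           inj_on P {..<2*r+2} \<and>
           (\<forall>i<2*r+2. e3c_path r s t (A, B, C, d) (A', B', C', d') (P i)
                       \<and> path_len (P i) \<le> r + s + 7) \<and>
           (\<forall>i<2*r+2. \<forall>j<2*r+2. i \<noteq> j \<longrightarrow>
              internally_disjoint (A, B, C, d) (A', B', C', d') (P i) (P j))"
proof -
  have "\<exists>P. disjoint_paths r s t (A, B, C, d) (A', B', C, d') (2 * r + 2) (r + s + 7) P"
  proof (cases "d' < d")
    case True
    then show ?thesis using disjoint_paths_descending assms by simp
  next
    case False
    then obtain P where "disjoint_paths r s t (A', B', C, d') (A, B, C, d) (2 * r + 2) (r + s + 7) P"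
      using disjoint_paths_descending[of r s t A' A B' B C d d'] assms by auto
    then show ?thesis using disjoint_paths_rev by blast
  qed
  moreover have "\<not> e3c_adj r s t (A, B, C, d) (A', B', C, d')" "(A, B, C, d) \<noteq> (A', B', C, d')"
    using assms(6,7) by (auto simp: e3c_adj_def)
  ultimately show ?thesis
    using inj_on_disjoint_paths assms(8) unfolding disjoint_paths_def by blast
qed

end
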